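(* For all integers $n,d,k,p\ge0$, $$P_p(n,\omega^d\cdot k)=\begin{cases}0 & d=0,\ n>k\\ 1 & n=0,\ p=0\\ 0 & n=0,\ p\ge1\\ \binom{k}{n} & d=0,\ 1\le n\le k,\ p=0\\ 0 & d=0,\ 1\le n\le k,\ p\ge1\\ k^n & d=1,\ n\ge1,\ n=p\\ 0 & d=1,\ n\ge1,\ n\ne p\\ 0 & d\ge2,\ n\ge1,\ p=0\\ \displaystyle k\sum_{j=1}^{n}\sum_{i=0}^{p-1}\binom{p-1}{i}P_i(j,\omega^{d-1})\,P_{p-1-i}(n-j,\omega^d\cdot k) & d\ge2,\ n\ge1,\ p\ge1.\end{cases}$$
   Context: Fix integers $n,d,k\ge0$. Every $\beta<\omega^d\cdot k$ is uniquely written $\omega^d b+\omega^{d-1}a_{d-1}+\cdots+a_0$ with $0\le b<k$, $a_j\in\mathbb{N}$. A coloring rule (CR) on $\binom{\omega^d\cdot k}{n}$ is a pair $(\mathcal{Y},\preceq)$ with $\mathcal{Y}:\{1,\dots,n\}\to\{0,\dots,k-1\}$ and $\preceq$ a total preorder on $I=\{(i,j):1\le i\le n,0\le j<d\}$ (write $\equiv$ for the induced equivalence and $\prec$ for the strict part) such that: (1) if $d\ge1$, $(i,0)\prec(i',0)$ for $i<i'$; if $d=0$, $\mathcal{Y}(i)<\mathcal{Y}(i')$ for $i<i'$; (2) $(i,j)\equiv(i',j)$ for some $j$ implies $\mathcal{Y}(i)=\mathcal{Y}(i')$; (3) $(i,j)\prec(i,j')$ for $j>j'$; (4) $(i,j)\equiv(i',j')$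 implies $j=j'$; (5) for $j>0$, $(i,j)\not\equiv(i',j)$ implies $(i,j-1)\not\equiv(i',j-1)$. The size of a CR is the number of $\equiv$-classes of $I$. $P_p(n,\omega^d\cdot k)$ is the number of CRs of size $p$ on $\binom{\omega^d\cdot k}{n}$, and $P_p(n,\omega^{d})$ means $P_p(n,\omega^{d}\cdot1)$. *)

theory Defs
  imports Main "HOL-Library.FuncSet"
begin

definition CR_I :: "nat \<Rightarrow> nat \<Rightarrow> (nat \<times> nat) set" where
  "CR_I n d = {(i, j). 1 \<le> i \<and> i \<le> n \<and> j < d}"

definition CR_eq :: "(nat \<times> nat) rel \<Rightarrow> nat \<times> nat \<Rightarrow> nat \<times> nat \<Rightarrow> bool" where
  "CR_eq R x y \<longleftrightarrow> (x, y) \<in> R \<and> (y, x) \<in> R"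

definition CR_lt :: "(nat \<times> nat) rel \<Rightarrow> nat \<times> nat \<Rightarrow> nat \<times> nat \<Rightarrow> bool" where
  "CR_lt R x y \<longleftrightarrow> (x, y) \<in> R \<and> (y, x) \<notin> R"

text \<open>A coloring rule (Y, R) on [omega^d * k]^n. Y is an extensional function
  {1..n} -> {0..k-1}; R is a total preorder on I (a relation contained in I x I).\<close>
definition is_CR :: "nat \<Rightarrow> nat \<Rightarrow> nat \<Rightarrow> (nat \<Rightarrow> nat) \<Rightarrow> (nat \<times> nat) rel \<Rightarrow> bool" where
  "is_CR n d k Y R \<longleftrightarrow>
     Y \<in> {1..n} \<rightarrow>\<^sub>E {..<k} \<and>
     R \<subseteq> CR_I n d \<times> CR_I n d \<and> refl_on (CR_I n d) R \<and> trans R \<and> total_on (CR_I n d) R \<and>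
     \<comment> \<open>(1)\<close>
     (d \<ge> 1 \<longrightarrow> (\<forall>i i'. 1 \<le> i \<and> i < i' \<and> i' \<le> n \<longrightarrow> CR_lt R (i, 0) (i', 0))) \<and>
     (d = 0 \<longrightarrow> (\<forall>i i'. 1 \<le> i \<and> i < i' \<and> i' \<le> n \<longrightarrow> Y i < Y i')) \<and>
     \<comment> \<open>(2)\<close>
     (\<forall>i i' j. (i, j) \<in> CR_I n d \<and> (i', j) \<in> CR_I n d \<and> CR_eq R (i, j) (i', j) \<longrightarrow> Y i = Y i') \<and>
     \<comment> \<open>(3)\<close>
     (\<forall>i j j'. (i, j) \<in> CR_I n d \<and> (i, j') \<in> CR_I n d \<and> j > j' \<longrightarrow> CR_lt R (i, j) (i, j')) \<and>
     \<comment> \<open>(4)\<close>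
     (\<forall>i j i' j'. (i, j) \<in> CR_I n d \<and> (i', j') \<in> CR_I n d \<and> CR_eq R (i, j) (i', j') \<longrightarrow> j = j') \<and>
     \<comment> \<open>(5)\<close>
     (\<forall>i i' j. j > 0 \<and> (i, j) \<in> CR_I n d \<and> (i', j) \<in> CR_I n d \<and> \<not> CR_eq R (i, j) (i', j)
        \<longrightarrow> \<not> CR_eq R (i, j - 1) (i', j - 1))"

definition CR_size :: "nat \<Rightarrow> nat \<Rightarrow> (nat \<times> nat) rel \<Rightarrow> nat" where
  "CR_size n d R = card (CR_I n d // {(x, y). CR_eq R x y})"

definition P :: "nat \<Rightarrow> nat \<Rightarrow> nat \<Rightarrow> nat \<Rightarrow> nat" where
  "P p n d k = card {(Y, R). is_CR n d k Y R \<and> CR_size n d R = p}"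

end

theory Submission
  imports Defs
begin

text \<open>Ordering the \<open>\<equiv>\<close>-classes of a coloring rule of size \<open>p\<close>, we label them increasingly by
  the elements of an arbitrary \<open>p\<close>-element set \<open>V\<close> of naturals: a total preorder on a finite set
  is induced by a unique rank function onto \<open>V\<close>. Naming each row by the label of its level-0
  entry then turns coloring rules of size \<open>p\<close> bijectively into labelled rules on \<open>V\<close>.

  If \<open>n = 0\<close> or \<open>d = 0\<close> the index set is empty and only the colouring counts, which for
  \<open>d = 0\<close> must be strictly increasing: there are \<open>k choose n\<close> of them. If \<open>d = 1\<close> the
  labelling is forced and only the \<open>k ^ n\<close> colourings remain.

  For \<open>d \<ge> 2\<close> let \<open>m\<close> be the least label. It occurs only on the last level, on a nonempty set
  \<open>S\<close> of rows. By (5) equal labels propagate to higher levels, so no row outside \<open>S\<close> shares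
  a class with a row of \<open>S\<close>: the labels split into \<open>m\<close>, the labels \<open>A\<close> of the other levels
  of \<open>S\<close>, and the labels of the remaining rows. By (2) the rows of \<open>S\<close> have a common colour,
  and their first \<open>d - 1\<close> levels form a one-coloured labelled rule on \<open>A\<close>. Summing over the
  colour, over \<open>A\<close> with \<open>card A = i\<close> and over \<open>j = card S\<close> gives the recursion.\<close>

section \<open>Enumerating finite sets of naturals\<close>

definition enum :: "nat set \<Rightarrow> nat \<Rightarrow> nat" where
  "enum V i = sorted_list_of_set V ! i"

lemma enum_in: "finite V \<Longrightarrow> i < card V \<Longrightarrow> enum V i \<in> V"
  unfolding enum_def by (metis nth_mem set_sorted_list_of_set length_sorted_list_of_set)

lemma strict_mono_on_enum: "finite V \<Longrightarrow> strict_mono_on {..<card V} (enum V)"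
  unfolding enum_def
  by (intro strict_mono_onI) (simp add: sorted_wrt_nth_less[OF strict_sorted_list_of_set])

lemma enum_image: "finite V \<Longrightarrow> enum V ` {..<card V} = V"
  unfolding enum_def
  by (metis atLeast0LessThan atLeastLessThan_upt length_sorted_list_of_set map_nth
      set_map set_sorted_list_of_set)

lemma enum_strict_mono_image:
  assumes "strict_mono_on {..<n} g" "i < n"
  shows "enum (g ` {..<n}) i = g i"
proof -
  have "sorted_wrt (<) (map g [0..<n])"
    using assms(1) by (auto simp: sorted_wrt_iff_nth_less strict_mono_onD)
  moreover have "card (g ` {..<n}) = n"
    using card_image[OF strict_mono_on_imp_inj_on[OF assms(1)]] by simp
  ultimately have "sorted_list_of_set (g ` {..<n}) = map g [0..<n]"
    by (subst sorted_list_of_set_unique[symmetric]) (auto simp: atLeast0LessThan)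
  then show ?thesis
    using assms(2) by (simp add: enum_def)
qed

lemma enum_strict_mono_image_Suc:
  assumes "strict_mono_on {1..n} g" "i \<in> {1..n}"
  shows "enum (g ` {1..n}) (i - 1) = g i"
proof -
  have "strict_mono_on {..<n} (g \<circ> Suc)"
    using strict_mono_onD[OF assms(1)] by (intro strict_mono_onI) simp
  moreover have "g ` {1..n} = (g \<circ> Suc) ` {..<n}"
    by (simp only: image_comp[symmetric] image_Suc_lessThan)
  ultimately show ?thesis
    using enum_strict_mono_image[of n "g \<circ> Suc" "i - 1"] assms(2) by auto
qed

lemma strict_mono_on_onto_self:
  fixes V :: "nat set"
  assumes "finite V" "strict_mono_on V \<psi>" "\<psi> ` V = V" "v \<in> V"
  shows "\<psi> v = v"
proof -
  have mono: "strict_mono_on {..<card V} (\<psi> \<circ> enum V)"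
  proof (intro strict_mono_onI)
    fix r s assume "r \<in> {..<card V}" "s \<in> {..<card V}" "r < s"
    then have "enum V r < enum V s" "enum V r \<in> V" "enum V s \<in> V"
      using assms(1) enum_in strict_mono_onD[OF strict_mono_on_enum] by auto
    then show "(\<psi> \<circ> enum V) r < (\<psi> \<circ> enum V) s"
      using assms(2) by (simp add: strict_mono_onD)
  qed
  obtain i where i: "i < card V" "v = enum V i"
    using assms(1,4) enum_image by blast
  have "(\<psi> \<circ> enum V) ` {..<card V} = V"
    using assms(1,3) by (simp add: image_comp[symmetric] enum_image del: image_comp o_apply)
  then show ?thesis
    using enum_strict_mono_image[OF mono i(1)] i by simp
qed

lemma ex_strict_mono_on_onto:
  assumes "finite W" "finite V" "card W = card V"
  obtains \<phi> :: "nat \<Rightarrow> nat" where "strict_mono_on W \<phi>" "\<phi> ` W = V"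
proof
  let ?\<iota> = "the_inv_into {..<card W} (enum W)"
  have bij: "bij_betw (enum W) {..<card W} W"
    using assms(1) by (simp add: bij_betw_def enum_image strict_mono_on_imp_inj_on strict_mono_on_enum)
  show "strict_mono_on W (enum V \<circ> ?\<iota>)"
  proof (intro strict_mono_onI)
    fix w w' assume w: "w \<in> W" "w' \<in> W" "w < w'"
    have \<iota>: "?\<iota> w < card W" "?\<iota> w' < card W" "enum W (?\<iota> w) = w" "enum W (?\<iota> w') = w'"
      using bij w by (auto intro: the_inv_into_into[of _ _ _ "{..<card W}", simplified]
          simp: bij_betw_def f_the_inv_into_f)
    then have "?\<iota> w < ?\<iota> w'"
      using w strict_mono_on_less[OF strict_mono_on_enum[OF assms(1)]] by fastforce
    then show "(enum V \<circ> ?\<iota>) w < (enum V \<circ> ?\<iota>) w'"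
      using \<iota> assms strict_mono_on_enum[OF assms(2)] by (simp add: strict_mono_onD)
  qed
  have "?\<iota> ` W = {..<card W}"
    using bij by (simp add: bij_betw_the_inv_into bij_betw_imp_surj_on)
  then show "(enum V \<circ> ?\<iota>) ` W = V"
    using assms by (simp add: image_comp[symmetric] enum_image del: image_comp o_apply)
qed

section \<open>Rank functions of total preorders\<close>

definition induced_preorder :: "('a \<Rightarrow> nat) \<Rightarrow> 'a set \<Rightarrow> 'a rel" where
  "induced_preorder F I = {(x, y). x \<in> I \<and> y \<in> I \<and> F x \<le> F y}"

lemma induced_preorder_iff: "(x, y) \<in> induced_preorder F I \<longleftrightarrow> x \<in> I \<and> y \<in> I \<and> F x \<le> F y"
  by (simp add: induced_preorder_def)

lemma CR_eq_induced_preorder [simp]: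
  "CR_eq (induced_preorder F I) x y \<longleftrightarrow> x \<in> I \<and> y \<in> I \<and> F x = F y"
  unfolding CR_eq_def induced_preorder_def by auto

lemma CR_lt_induced_preorder [simp]:
  "CR_lt (induced_preorder F I) x y \<longleftrightarrow> x \<in> I \<and> y \<in> I \<and> F x < F y"
  unfolding CR_lt_def induced_preorder_def by auto

lemma total_preorder_induced_preorder:
  "induced_preorder F I \<subseteq> I \<times> I" "refl_on I (induced_preorder F I)"
  "trans (induced_preorder F I)" "total_on I (induced_preorder F I)"
  unfolding induced_preorder_def refl_on_def trans_def total_on_def by auto

lemma induced_preorder_cong:
  "(\<And>x. x \<in> I \<Longrightarrow> F x = G x) \<Longrightarrow> induced_preorder F I = induced_preorder G I"
  unfolding induced_preorder_def by auto

lemma card_quotient_kernel: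
  "card (I // {(x, y). x \<in> I \<and> y \<in> I \<and> F x = F y}) = card (F ` I)"
proof -
  let ?class = "\<lambda>v. {x \<in> I. F x = v}"
  have "I // {(x, y). x \<in> I \<and> y \<in> I \<and> F x = F y} = ?class ` F ` I"
  proof -
    have "{(x, y). x \<in> I \<and> y \<in> I \<and> F x = F y} `` {x} = ?class (F x)" if "x \<in> I" for x
      using that by auto
    then show ?thesis
      unfolding quotient_def by (auto simp: image_image)
  qed
  moreover have "inj_on ?class (F ` I)"
    by (rule inj_onI) auto
  ultimately show ?thesis
    by (simp add: card_image)
qed

lemma card_classes_induced_preorder:
  "card (I // {(x, y). CR_eq (induced_preorder F I) x y}) = card (F ` I)"
  using card_quotient_kernel[of I F] by simp

lemma induced_preorder_eq_imp_eq:
  assumes "finite I" "F ` I = G ` I" "induced_preorder F I = induced_preorder G I" "x \<in> I"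
  shows "F x = G x"
proof -
  define \<psi> where "\<psi> v = G (inv_into I F v)" for v
  have same_le: "F y \<le> F z \<longleftrightarrow> G y \<le> G z" if "y \<in> I" "z \<in> I" for y z
    using arg_cong[OF assms(3), of "\<lambda>R. (y, z) \<in> R"] that by (simp add: induced_preorder_iff)
  have \<psi>: "\<psi> (F y) = G y" if y: "y \<in> I" for y
  proof -
    have y': "inv_into I F (F y) \<in> I" "F (inv_into I F (F y)) = F y"
      using inv_into_into[OF imageI[OF y]] f_inv_into_f[OF imageI[OF y]] by auto
    then have "G (inv_into I F (F y)) \<le> G y" "G y \<le> G (inv_into I F (F y))"
      using same_le[OF y'(1) y] same_le[OF y y'(1)] by simp_all
    then show ?thesis
      unfolding \<psi>_def by (rule order.antisym)
  qed
  have "strict_mono_on (F ` I) \<psi>"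
  proof (intro strict_mono_onI, elim imageE)
    fix v w y z assume "v < w" "v = F y" "y \<in> I" "w = F z" "z \<in> I"
    then have "\<not> G z \<le> G y"
      using same_le[of z y] by simp
    then show "\<psi> v < \<psi> w"
      using \<open>v = F y\<close> \<open>w = F z\<close> \<open>y \<in> I\<close> \<open>z \<in> I\<close> by (simp add: \<psi>)
  qed
  moreover have "\<psi> ` F ` I = G ` I"
    unfolding image_image using \<psi> by simp
  ultimately have "\<psi> (F x) = F x"
    using assms(1,2,4) by (intro strict_mono_on_onto_self) auto
  then show ?thesis
    using \<psi>[OF assms(4)] by simp
qed

lemma total_preorder_eq_induced_preorder:
  assumes I: "finite I" and R: "R \<subseteq> I \<times> I" "refl_on I R" "trans R" "total_on I R"
    and V: "finite V" "card V = card (I // {(x, y). CR_eq R x y})"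
  obtains F where "F ` I = V" "R = induced_preorder F I"
proof -
  define g where "g x = card {y \<in> I. (y, x) \<in> R}" for x
  have g_le: "(x, y) \<in> R \<longleftrightarrow> g x \<le> g y" if "x \<in> I" "y \<in> I" for x y
  proof
    assume "(x, y) \<in> R"
    then have "{z \<in> I. (z, x) \<in> R} \<subseteq> {z \<in> I. (z, y) \<in> R}"
      using R(3) by (auto dest: transD)
    then show "g x \<le> g y"
      unfolding g_def using I by (intro card_mono) auto
  next
    assume "g x \<le> g y"
    show "(x, y) \<in> R"
    proof (rule ccontr)
      assume xy: "(x, y) \<notin> R"
      then have "(y, x) \<in> R"
        using R(2,4) that by (metis refl_onD total_on_def)
      then have "{z \<in> I. (z, y) \<in> R} \<subset> {z \<in> I. (z, x) \<in> R}"
        using R(2,3) xy that by (auto dest: transD refl_onD)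
      then have "g y < g x"
        unfolding g_def using I by (intro psubset_card_mono) auto
      with \<open>g x \<le> g y\<close> show False by simp
    qed
  qed
  have "R = induced_preorder g I"
    using R(1) g_le unfolding induced_preorder_def by auto
  then have "card (g ` I) = card V"
    using V(2) card_classes_induced_preorder[of I g] by simp
  then obtain \<phi> :: "nat \<Rightarrow> nat" where \<phi>: "strict_mono_on (g ` I) \<phi>" "\<phi> ` g ` I = V"
    using ex_strict_mono_on_onto[of "g ` I" V] I V(1) by auto
  show ?thesis
  proof
    show "(\<phi> \<circ> g) ` I = V"
      using \<phi>(2) by (simp add: image_comp)
    show "R = induced_preorder (\<phi> \<circ> g) I"
      using \<open>R = induced_preorder g I\<close> strict_mono_on_less_eq[OF \<phi>(1)]
      unfolding induced_preorder_def by auto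
  qed
qed

section \<open>Ranked and labelled coloring rules\<close>

lemma CR_I_eq: "CR_I n d = {1..n} \<times> {..<d}"
  by (auto simp: CR_I_def)

lemma CR_I_iff [simp]: "(i, j) \<in> CR_I n d \<longleftrightarrow> 1 \<le> i \<and> i \<le> n \<and> j < d"
  by (simp add: CR_I_def)

lemma finite_CR_I [simp]: "finite (CR_I n d)"
  by (simp add: CR_I_eq)

definition coloring_rules :: "nat \<Rightarrow> nat \<Rightarrow> nat \<Rightarrow> nat \<Rightarrow> ((nat \<Rightarrow> nat) \<times> (nat \<times> nat) rel) set" where
  "coloring_rules p n d k = {(Y, R). is_CR n d k Y R \<and> CR_size n d R = p}"

lemma P_eq_card_coloring_rules: "P p n d k = card (coloring_rules p n d k)"
  by (simp add: P_def coloring_rules_def)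

text \<open>Condition (5) appears here contrapositively, as upward propagation of equal ranks.\<close>

locale ranked_rule =
  fixes n d k :: nat and Y :: "nat \<Rightarrow> nat" and F :: "nat \<times> nat \<Rightarrow> nat"
  assumes colour: "Y \<in> {1..n} \<rightarrow>\<^sub>E {..<k}"
    and rank_rows: "1 \<le> i \<Longrightarrow> i < i' \<Longrightarrow> i' \<le> n \<Longrightarrow> F (i, 0) < F (i', 0)"
    and colour_eq: "1 \<le> i \<Longrightarrow> i \<le> n \<Longrightarrow> 1 \<le> i' \<Longrightarrow> i' \<le> n \<Longrightarrow> j < d \<Longrightarrow> F (i, j) = F (i', j)
      \<Longrightarrow> Y i = Y i'"
    and rank_decreasing: "1 \<le> i \<Longrightarrow> i \<le> n \<Longrightarrow> j' < j \<Longrightarrow> j < d \<Longrightarrow> F (i, j) < F (i, j')"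
    and rank_level: "1 \<le> i \<Longrightarrow> i \<le> n \<Longrightarrow> 1 \<le> i' \<Longrightarrow> i' \<le> n \<Longrightarrow> j < d \<Longrightarrow> j' < d
      \<Longrightarrow> F (i, j) = F (i', j') \<Longrightarrow> j = j'"
    and rank_eq_Suc: "1 \<le> i \<Longrightarrow> i \<le> n \<Longrightarrow> 1 \<le> i' \<Longrightarrow> i' \<le> n \<Longrightarrow> Suc j < d
      \<Longrightarrow> F (i, j) = F (i', j) \<Longrightarrow> F (i, Suc j) = F (i', Suc j)"

lemma induced_preorder_propagates_iff:
  fixes F :: "nat \<times> nat \<Rightarrow> nat" and n d :: nat
  defines "R \<equiv> induced_preorder F (CR_I n d)"
  shows "(\<forall>i i' j. 0 < j \<and> (i, j) \<in> CR_I n d \<and> (i', j) \<in> CR_I n d \<and> \<not> CR_eq R (i, j) (i', j)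
        \<longrightarrow> \<not> CR_eq R (i, j - 1) (i', j - 1)) \<longleftrightarrow>
      (\<forall>i i' j. 1 \<le> i \<longrightarrow> i \<le> n \<longrightarrow> 1 \<le> i' \<longrightarrow> i' \<le> n \<longrightarrow> Suc j < d
        \<longrightarrow> F (i, j) = F (i', j) \<longrightarrow> F (i, Suc j) = F (i', Suc j))"
proof (intro iffI allI impI)
  fix i i' j
  assume H: "\<forall>i i' j. 0 < j \<and> (i, j) \<in> CR_I n d \<and> (i', j) \<in> CR_I n d \<and> \<not> CR_eq R (i, j) (i', j)
      \<longrightarrow> \<not> CR_eq R (i, j - 1) (i', j - 1)"
    and a: "1 \<le> i" "i \<le> n" "1 \<le> i'" "i' \<le> n" "Suc j < d" "F (i, j) = F (i', j)"
  show "F (i, Suc j) = F (i', Suc j)"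
  proof (rule ccontr)
    assume "F (i, Suc j) \<noteq> F (i', Suc j)"
    then have "0 < Suc j \<and> (i, Suc j) \<in> CR_I n d \<and> (i', Suc j) \<in> CR_I n d \<and> \<not> CR_eq R (i, Suc j) (i', Suc j)"
      using a by (simp add: R_def)
    then have "\<not> CR_eq R (i, Suc j - 1) (i', Suc j - 1)"
      using H by blast
    then show False
      using a by (simp add: R_def)
  qed
next
  fix i i' j
  assume H: "\<forall>i i' j. 1 \<le> i \<longrightarrow> i \<le> n \<longrightarrow> 1 \<le> i' \<longrightarrow> i' \<le> n \<longrightarrow> Suc j < d
      \<longrightarrow> F (i, j) = F (i', j) \<longrightarrow> F (i, Suc j) = F (i', Suc j)"
    and a: "0 < j \<and> (i, j) \<in> CR_I n d \<and> (i', j) \<in> CR_I n d \<and> \<not> CR_eq R (i, j) (i', j)"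
  then obtain j0 where j0: "j = Suc j0"
    using gr0_implies_Suc by blast
  show "\<not> CR_eq R (i, j - 1) (i', j - 1)"
  proof
    assume "CR_eq R (i, j - 1) (i', j - 1)"
    then have "1 \<le> i \<and> i \<le> n \<and> 1 \<le> i' \<and> i' \<le> n \<and> Suc j0 < d \<and> F (i, j0) = F (i', j0)"
      using a j0 by (simp add: R_def)
    then have "F (i, j) = F (i', j)"
      using H j0 by blast
    then show False
      using a by (auto simp: R_def)
  qed
qed

lemma is_CR_induced_preorder_iff:
  assumes "0 < d"
  shows "is_CR n d k Y (induced_preorder F (CR_I n d)) \<longleftrightarrow> ranked_rule n d k Y F"
proof -
  let ?I = "CR_I n d" and ?R = "induced_preorder F (CR_I n d)"
  have rows: "(d \<ge> 1 \<longrightarrow> (\<forall>i i'. 1 \<le> i \<and> i < i' \<and> i' \<le> n \<longrightarrow> CR_lt ?R (i, 0) (i', 0))) \<longleftrightarrow>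
      (\<forall>i i'. 1 \<le> i \<longrightarrow> i < i' \<longrightarrow> i' \<le> n \<longrightarrow> F (i, 0) < F (i', 0))"
    using assms by auto
  have colour: "(\<forall>i i' j. (i, j) \<in> ?I \<and> (i', j) \<in> ?I \<and> CR_eq ?R (i, j) (i', j) \<longrightarrow> Y i = Y i') \<longleftrightarrow>
      (\<forall>i i' j. 1 \<le> i \<longrightarrow> i \<le> n \<longrightarrow> 1 \<le> i' \<longrightarrow> i' \<le> n \<longrightarrow> j < d \<longrightarrow> F (i, j) = F (i', j)
        \<longrightarrow> Y i = Y i')"
    by auto
  have decreasing: "(\<forall>i j j'. (i, j) \<in> ?I \<and> (i, j') \<in> ?I \<and> j > j' \<longrightarrow> CR_lt ?R (i, j) (i, j')) \<longleftrightarrow>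
      (\<forall>i j' j. 1 \<le> i \<longrightarrow> i \<le> n \<longrightarrow> j' < j \<longrightarrow> j < d \<longrightarrow> F (i, j) < F (i, j'))"
    by auto
  have level: "(\<forall>i j i' j'. (i, j) \<in> ?I \<and> (i', j') \<in> ?I \<and> CR_eq ?R (i, j) (i', j') \<longrightarrow> j = j') \<longleftrightarrow>
      (\<forall>i i' j j'. 1 \<le> i \<longrightarrow> i \<le> n \<longrightarrow> 1 \<le> i' \<longrightarrow> i' \<le> n \<longrightarrow> j < d \<longrightarrow> j' < d
        \<longrightarrow> F (i, j) = F (i', j') \<longrightarrow> j = j')"
    by auto
  show ?thesis
    unfolding is_CR_def ranked_rule_def rows colour decreasing level induced_preorder_propagates_iff
    using assms total_preorder_induced_preorder[where F = F and I = ?I] by simp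
qed


type_synonym labelling = "nat set \<times> (nat \<Rightarrow> nat) \<times> (nat \<times> nat \<Rightarrow> nat)"

text \<open>A coloring rule whose \<open>\<equiv>\<close>-classes are labelled by the elements of \<open>V\<close> in increasing
  order: \<open>f (l, j)\<close> is the label of the class of level \<open>j\<close> of row \<open>l\<close>, and each row is named
  by the label of its level-0 entry, so that the set of rows \<open>L\<close> is a subset of \<open>V\<close> and
  condition (1) holds automatically.\<close>

locale labelled_rule =
  fixes d k :: nat and V L :: "nat set" and Y :: "nat \<Rightarrow> nat" and f :: "nat \<times> nat \<Rightarrow> nat"
  assumes colour: "Y \<in> L \<rightarrow>\<^sub>E {..<k}"
    and label: "f \<in> L \<times> {..<d} \<rightarrow>\<^sub>E V"
    and label_onto: "f ` (L \<times> {..<d}) = V"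
    and label_row: "l \<in> L \<Longrightarrow> f (l, 0) = l"
    and colour_eq: "\<lbrakk>l \<in> L; l' \<in> L; j < d; f (l, j) = f (l', j)\<rbrakk> \<Longrightarrow> Y l = Y l'"
    and label_decreasing: "\<lbrakk>l \<in> L; j' < j; j < d\<rbrakk> \<Longrightarrow> f (l, j) < f (l, j')"
    and label_level: "\<lbrakk>l \<in> L; l' \<in> L; j < d; j' < d; f (l, j) = f (l', j')\<rbrakk> \<Longrightarrow> j = j'"
    and label_eq_Suc: "\<lbrakk>l \<in> L; l' \<in> L; Suc j < d; f (l, j) = f (l', j)\<rbrakk> \<Longrightarrow> f (l, Suc j) = f (l', Suc j)"

definition labelled_rules :: "nat \<Rightarrow> nat \<Rightarrow> nat \<Rightarrow> nat set \<Rightarrow> labelling set" where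
  "labelled_rules n d k V = {(L, Y, f). labelled_rule d k V L Y f \<and> card L = n}"

context labelled_rule
begin

lemma label_in: "l \<in> L \<Longrightarrow> j < d \<Longrightarrow> f (l, j) \<in> V"
  using label by auto

lemma rows_subset: "0 < d \<Longrightarrow> L \<subseteq> V"
  using label_in label_row by force

lemma label_eq_mono:
  assumes "l \<in> L" "l' \<in> L" "f (l, j) = f (l', j)" "j \<le> j'" "j' < d"
  shows "f (l, j') = f (l', j')"
  using assms(4,5)
proof (induction j' rule: dec_induct)
  case (step i)
  then show ?case
    using label_eq_Suc[OF assms(1,2)] by simp
qed (use assms(3) in simp)

end

definition to_CR :: "nat \<Rightarrow> nat \<Rightarrow> labelling \<Rightarrow> (nat \<Rightarrow> nat) \<times> (nat \<times> nat) rel" where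
  "to_CR n d = (\<lambda>(L, Y, f). (\<lambda>i\<in>{1..n}. Y (enum L (i - 1)),
     induced_preorder (\<lambda>(i, j). f (enum L (i - 1), j)) (CR_I n d)))"

lemma enum_shift_image: "finite L \<Longrightarrow> (\<lambda>i. enum L (i - 1)) ` {1..card L} = L"
  using enum_image[of L] image_Suc_lessThan[of "card L"]
  by (metis (no_types, lifting) atLeastAtMost_iff diff_Suc_1 image_cong image_image)

lemma enum_rows_image:
  "finite L \<Longrightarrow> (\<lambda>(i, j). (enum L (i - 1), j)) ` CR_I (card L) d = L \<times> {..<d}"
  using map_prod_surj_on[OF enum_shift_image, of L id "{..<d}"]
  by (simp add: CR_I_eq map_prod_def)

context labelled_rule
begin

lemma finite_rows: "0 < d \<Longrightarrow> finite V \<Longrightarrow> finite L"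
  using rows_subset finite_subset by blast

lemma cell_labels_image:
  assumes "0 < d" "finite V"
  shows "(\<lambda>(i, j). f (enum L (i - 1), j)) ` CR_I (card L) d = V"
proof -
  have "(\<lambda>(i, j). f (enum L (i - 1), j)) ` CR_I (card L) d
      = f ` ((\<lambda>(i, j). (enum L (i - 1), j)) ` CR_I (card L) d)"
    unfolding image_image by (simp add: case_prod_unfold)
  then show ?thesis
    using label_onto enum_rows_image[OF finite_rows[OF assms]] by simp
qed

lemma to_CR_mem:
  assumes d: "0 < d" and V: "finite V"
  shows "to_CR (card L) d (L, Y, f) \<in> coloring_rules (card V) (card L) d k"
proof -
  let ?n = "card L" and ?F = "\<lambda>(i, j). f (enum L (i - 1), j)"
  have row: "enum L (i - 1) \<in> L" if "1 \<le> i" "i \<le> ?n" for i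
    using enum_in[OF finite_rows[OF d V]] that by simp
  have row_less: "enum L (i - 1) < enum L (i' - 1)" if "1 \<le> i" "i < i'" "i' \<le> ?n" for i i'
    using strict_mono_onD[OF strict_mono_on_enum[OF finite_rows[OF d V]]] that by simp
  have "ranked_rule ?n d k (\<lambda>i\<in>{1..?n}. Y (enum L (i - 1))) ?F"
    by unfold_locales (use colour row row_less label_row d in
        \<open>auto intro: colour_eq label_decreasing label_level label_eq_Suc\<close>)
  moreover have "CR_size ?n d (induced_preorder ?F (CR_I ?n d)) = card V"
    using cell_labels_image[OF d V] unfolding CR_size_def card_classes_induced_preorder by simp
  ultimately show ?thesis
    using is_CR_induced_preorder_iff[OF d] unfolding coloring_rules_def to_CR_def by simp
qed

end

lemma to_CR_inj:
  assumes d: "0 < d" and V: "finite V"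
  shows "inj_on (to_CR n d) (labelled_rules n d k V)"
proof (intro inj_onI)
  fix t1 t2 assume t1: "t1 \<in> labelled_rules n d k V" and t2: "t2 \<in> labelled_rules n d k V"
    and eq: "to_CR n d t1 = to_CR n d t2"
  obtain L1 Y1 f1 L2 Y2 f2 where t: "t1 = (L1, Y1, f1)" "t2 = (L2, Y2, f2)"
    by (cases t1, cases t2) auto
  interpret r1: labelled_rule d k V L1 Y1 f1
    using t1 t by (simp add: labelled_rules_def)
  interpret r2: labelled_rule d k V L2 Y2 f2
    using t2 t by (simp add: labelled_rules_def)
  have n: "card L1 = n" "card L2 = n"
    using t1 t2 t by (auto simp: labelled_rules_def)
  have fin: "finite L1" "finite L2"
    using r1.finite_rows[OF d V] r2.finite_rows[OF d V] .
  let ?F1 = "\<lambda>(i, j). f1 (enum L1 (i - 1), j)" and ?F2 = "\<lambda>(i, j). f2 (enum L2 (i - 1), j)"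
  have "induced_preorder ?F1 (CR_I n d) = induced_preorder ?F2 (CR_I n d)"
    using eq t by (simp add: to_CR_def)
  moreover have "?F1 ` CR_I n d = ?F2 ` CR_I n d"
    using r1.cell_labels_image[OF d V] r2.cell_labels_image[OF d V] n by simp
  ultimately have F: "?F1 x = ?F2 x" if "x \<in> CR_I n d" for x
    using induced_preorder_eq_imp_eq[OF finite_CR_I _ _ that] by simp
  have enum_eq: "enum L1 (i - 1) = enum L2 (i - 1)" if "i \<in> {1..n}" for i
  proof -
    have "enum L1 (i - 1) \<in> L1" "enum L2 (i - 1) \<in> L2"
      using that n fin by (auto intro: enum_in)
    then show ?thesis
      using F[of "(i, 0)"] that d r1.label_row r2.label_row by simp
  qed
  have "L1 = (\<lambda>i. enum L1 (i - 1)) ` {1..n}"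
    using enum_shift_image[OF fin(1)] n by simp
  also have "\<dots> = (\<lambda>i. enum L2 (i - 1)) ` {1..n}"
    using enum_eq by (rule image_cong[OF refl])
  also have "\<dots> = L2"
    using enum_shift_image[OF fin(2)] n by simp
  finally have L: "L1 = L2" .
  have "f1 = f2"
  proof (rule PiE_ext[OF r1.label])
    show "f2 \<in> L1 \<times> {..<d} \<rightarrow>\<^sub>E V"
      using r2.label L by simp
    fix x assume "x \<in> L1 \<times> {..<d}"
    then have "x \<in> (\<lambda>(i, j). (enum L1 (i - 1), j)) ` CR_I n d"
      using enum_rows_image[OF fin(1)] n by simp
    then obtain i j where "x = (enum L1 (i - 1), j)" "(i, j) \<in> CR_I n d"
      by fastforce
    then show "f1 x = f2 x"
      using F enum_eq by auto
  qed
  moreover have "Y1 = Y2"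
  proof (rule PiE_ext[OF r1.colour])
    show "Y2 \<in> L1 \<rightarrow>\<^sub>E {..<k}"
      using r2.colour L by simp
    fix l assume "l \<in> L1"
    then obtain i where i: "i \<in> {1..n}" "l = enum L1 (i - 1)"
      using enum_shift_image[OF fin(1)] n by blast
    have "(\<lambda>i\<in>{1..n}. Y1 (enum L1 (i - 1))) i = (\<lambda>i\<in>{1..n}. Y2 (enum L2 (i - 1))) i"
      using eq t by (simp add: to_CR_def)
    then show "Y1 l = Y2 l"
      using i enum_eq by simp
  qed
  ultimately show "t1 = t2"
    using t L by simp
qed

definition row_index :: "nat \<Rightarrow> (nat \<times> nat \<Rightarrow> nat) \<Rightarrow> nat \<Rightarrow> nat" where
  "row_index n F = the_inv_into {1..n} (\<lambda>i. F (i, 0))"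

definition labelling_of_rank :: "nat \<Rightarrow> nat \<Rightarrow> (nat \<Rightarrow> nat) \<Rightarrow> (nat \<times> nat \<Rightarrow> nat) \<Rightarrow> labelling" where
  "labelling_of_rank n d Y F = (let L = (\<lambda>i. F (i, 0)) ` {1..n} in
     (L, \<lambda>l\<in>L. Y (row_index n F l), \<lambda>(l, j)\<in>L \<times> {..<d}. F (row_index n F l, j)))"

context ranked_rule
begin

lemma strict_mono_on_rank_rows: "strict_mono_on {1..n} (\<lambda>i. F (i, 0))"
  by (intro strict_mono_onI) (auto intro: rank_rows)

lemma row_index_rank: "i \<in> {1..n} \<Longrightarrow> row_index n F (F (i, 0)) = i"
  unfolding row_index_def by (rule the_inv_into_f_f[OF strict_mono_on_imp_inj_on[OF strict_mono_on_rank_rows]])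

lemma row_index_in: "l \<in> (\<lambda>i. F (i, 0)) ` {1..n} \<Longrightarrow> row_index n F l \<in> {1..n}"
  using row_index_rank by auto

lemma rank_row_index: "l \<in> (\<lambda>i. F (i, 0)) ` {1..n} \<Longrightarrow> F (row_index n F l, 0) = l"
  using row_index_rank by auto

lemma labelling_of_rank_mem:
  assumes d: "0 < d" and FV: "F ` CR_I n d = V"
  shows "labelling_of_rank n d Y F \<in> labelled_rules n d k V"
proof -
  let ?L = "(\<lambda>i. F (i, 0)) ` {1..n}" and ?row = "row_index n F"
  let ?Y = "\<lambda>l\<in>?L. Y (?row l)" and ?f = "\<lambda>(l, j)\<in>?L \<times> {..<d}. F (?row l, j)"
  have in_I: "(?row l, j) \<in> CR_I n d" if "l \<in> ?L" "j < d" for l j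
    using row_index_in[OF that(1)] that(2) by simp
  have "labelled_rule d k V ?L ?Y ?f"
  proof
    show "?Y \<in> ?L \<rightarrow>\<^sub>E {..<k}"
      using PiE_mem[OF colour] row_index_in by auto
    show "?f \<in> ?L \<times> {..<d} \<rightarrow>\<^sub>E V"
      using FV in_I by auto
    have "?f ` (?L \<times> {..<d}) = F ` (\<lambda>(l, j). (?row l, j)) ` (?L \<times> {..<d})"
      by (force simp: image_iff)
    also have "(\<lambda>(l, j). (?row l, j)) ` (?L \<times> {..<d}) = CR_I n d"
      using row_index_in row_index_rank by (force simp: image_iff CR_I_eq)
    finally show "?f ` (?L \<times> {..<d}) = V"
      using FV by simp
  next
    fix l assume "l \<in> ?L"
    then show "?f (l, 0) = l"
      using d rank_row_index by simp
  next
    fix l l' j assume "l \<in> ?L" "l' \<in> ?L" "j < d" "?f (l, j) = ?f (l', j)"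
    then show "?Y l = ?Y l'"
      using colour_eq[of "?row l" "?row l'" j] row_index_in by auto
  next
    fix l j j' assume "l \<in> ?L" "j' < j" "j < d"
    then show "?f (l, j) < ?f (l, j')"
      using rank_decreasing[of "?row l" j' j] row_index_in by auto
  next
    fix l l' j j' assume "l \<in> ?L" "l' \<in> ?L" "j < d" "j' < d" "?f (l, j) = ?f (l', j')"
    then show "j = j'"
      using rank_level[of "?row l" "?row l'" j j'] row_index_in by auto
  next
    fix l l' j assume "l \<in> ?L" "l' \<in> ?L" "Suc j < d" "?f (l, j) = ?f (l', j)"
    then show "?f (l, Suc j) = ?f (l', Suc j)"
      using rank_eq_Suc[of "?row l" "?row l'" j] row_index_in by auto
  qed
  moreover have "card ?L = n"
    using card_image[OF strict_mono_on_imp_inj_on[OF strict_mono_on_rank_rows]] by simp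
  ultimately show ?thesis
    by (simp add: labelling_of_rank_def labelled_rules_def Let_def)
qed

lemma to_CR_labelling_of_rank: "to_CR n d (labelling_of_rank n d Y F) = (Y, induced_preorder F (CR_I n d))"
proof -
  let ?L = "(\<lambda>i. F (i, 0)) ` {1..n}"
  have rows: "enum ?L (i - 1) = F (i, 0)" "F (i, 0) \<in> ?L" "row_index n F (F (i, 0)) = i"
    if "i \<in> {1..n}" for i
    using that enum_strict_mono_image_Suc[OF strict_mono_on_rank_rows] row_index_rank by auto
  have "(\<lambda>i\<in>{1..n}. (\<lambda>l\<in>?L. Y (row_index n F l)) (enum ?L (i - 1))) = Y"
    using rows PiE_arb[OF colour] by (intro ext) simp
  moreover have "induced_preorder (\<lambda>(i, j). (\<lambda>(l, j)\<in>?L \<times> {..<d}. F (row_index n F l, j)) (enum ?L (i - 1), j))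
      (CR_I n d) = induced_preorder F (CR_I n d)"
    using rows by (intro induced_preorder_cong) auto
  ultimately show ?thesis
    by (simp add: to_CR_def labelling_of_rank_def Let_def)
qed

end

lemma to_CR_surj:
  assumes d: "0 < d" and V: "finite V" and c: "(Y, R) \<in> coloring_rules (card V) n d k"
  shows "(Y, R) \<in> to_CR n d ` labelled_rules n d k V"
proof -
  have cr: "is_CR n d k Y R" and size: "CR_size n d R = card V"
    using c by (auto simp: coloring_rules_def)
  obtain F where FV: "F ` CR_I n d = V" and RF: "R = induced_preorder F (CR_I n d)"
    using total_preorder_eq_induced_preorder[of "CR_I n d" R V] cr size V
    unfolding is_CR_def CR_size_def by auto
  interpret ranked_rule n d k Y F
    using cr RF is_CR_induced_preorder_iff[OF d] by simp
  show ?thesis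
    using labelling_of_rank_mem[OF d FV] to_CR_labelling_of_rank RF by (metis image_eqI)
qed

lemma card_labelled_rules:
  assumes "0 < d" "finite V"
  shows "card (labelled_rules n d k V) = P (card V) n d k"
proof -
  have "to_CR n d ` labelled_rules n d k V \<subseteq> coloring_rules (card V) n d k"
    using labelled_rule.to_CR_mem[OF _ assms] by (auto simp: labelled_rules_def)
  then have "bij_betw (to_CR n d) (labelled_rules n d k V) (coloring_rules (card V) n d k)"
    using to_CR_inj[OF assms] to_CR_surj[OF assms] unfolding bij_betw_def by auto
  then show ?thesis
    by (simp add: bij_betw_same_card P_eq_card_coloring_rules)
qed

section \<open>The base cases \<open>d = 0\<close>, \<open>n = 0\<close> and \<open>d = 1\<close>\<close>

lemma coloring_rules_empty_index:
  assumes "n = 0 \<or> d = 0"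
  shows "coloring_rules p n d k =
    (if p = 0 then (\<lambda>Y. (Y, {})) ` {Y \<in> {1..n} \<rightarrow>\<^sub>E {..<k}. d = 0 \<longrightarrow> strict_mono_on {1..n} Y} else {})"
proof -
  have I: "CR_I n d = {}"
    using assms by (auto simp: CR_I_def)
  have CR: "is_CR n d k Y R \<longleftrightarrow> R = {} \<and> Y \<in> {1..n} \<rightarrow>\<^sub>E {..<k} \<and> (d = 0 \<longrightarrow> strict_mono_on {1..n} Y)"
    for Y R
    unfolding is_CR_def I strict_mono_on_def using assms
    by (auto simp: refl_on_def trans_def total_on_def)
  have "CR_size n d R = 0" for R
    by (simp add: CR_size_def I quotient_def)
  then show ?thesis
    unfolding coloring_rules_def CR by auto
qed

lemma card_strict_mono_PiE:
  "card {Y \<in> {1..n} \<rightarrow>\<^sub>E {..<k}. strict_mono_on {1..n} Y} = k choose n"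
proof -
  let ?M = "{Y \<in> {1..n} \<rightarrow>\<^sub>E {..<k}. strict_mono_on {1..n} Y}"
  have "bij_betw (\<lambda>Y. Y ` {1..n}) ?M {S. S \<subseteq> {..<k} \<and> card S = n}"
  proof (rule bij_betw_imageI)
    show "inj_on (\<lambda>Y. Y ` {1..n}) ?M"
    proof (rule inj_onI)
      fix Y1 Y2 assume Y: "Y1 \<in> ?M" "Y2 \<in> ?M" "Y1 ` {1..n} = Y2 ` {1..n}"
      show "Y1 = Y2"
      proof (rule PiE_ext[of Y1 "{1..n}" "\<lambda>_. {..<k}" Y2])
        fix i assume "i \<in> {1..n}"
        then show "Y1 i = Y2 i"
          using enum_strict_mono_image_Suc[of n Y1 i] enum_strict_mono_image_Suc[of n Y2 i] Y by simp
      qed (use Y in auto)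
    qed
    show "(\<lambda>Y. Y ` {1..n}) ` ?M = {S. S \<subseteq> {..<k} \<and> card S = n}"
    proof (intro equalityI subsetI)
      fix S assume "S \<in> (\<lambda>Y. Y ` {1..n}) ` ?M"
      then obtain Y where "Y \<in> ?M" "S = Y ` {1..n}"
        by blast
      then show "S \<in> {S. S \<subseteq> {..<k} \<and> card S = n}"
        using card_image[OF strict_mono_on_imp_inj_on[of "{1..n}" Y]] by auto
    next
      fix S assume S: "S \<in> {S. S \<subseteq> {..<k} \<and> card S = n}"
      then have fin: "finite S"
        using finite_subset by auto
      let ?Y = "\<lambda>i\<in>{1..n}. enum S (i - 1)"
      have "enum S (i - 1) \<in> {..<k}" if "i \<in> {1..n}" for i
        using S enum_in[OF fin, of "i - 1"] that by (auto simp: subset_iff)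
      then have Y: "?Y \<in> ?M"
        using S strict_mono_onD[OF strict_mono_on_enum[OF fin]]
        by (auto intro!: strict_mono_onI)
      have "?Y ` {1..n} = (\<lambda>i. enum S (i - 1)) ` {1..n}"
        by (rule image_cong) auto
      then have "S = ?Y ` {1..n}"
        using enum_shift_image[OF fin] S by simp
      then show "S \<in> (\<lambda>Y. Y ` {1..n}) ` ?M"
        using Y by (rule image_eqI)
    qed
  qed
  then show ?thesis
    using n_subsets[of "{..<k}" n] by (simp add: bij_betw_same_card)
qed

lemma P_exponent_0: "P p n 0 k = (if p = 0 then k choose n else 0)"
  using coloring_rules_empty_index[of n 0 p k] card_strict_mono_PiE[of n k]
  by (simp add: P_eq_card_coloring_rules card_image inj_on_def)

lemma P_arity_0: "P p 0 d k = (if p = 0 then 1 else 0)"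
  using coloring_rules_empty_index[of 0 d p k]
  by (simp add: P_eq_card_coloring_rules card_image inj_on_def)

lemma labelled_rules_one_level:
  "labelled_rules n 1 k V =
    (if n = card V then (\<lambda>Y. (V, Y, \<lambda>(l, j)\<in>V \<times> {..<1}. l)) ` (V \<rightarrow>\<^sub>E {..<k}) else {})"
proof -
  have "labelled_rule 1 k V L Y f \<longleftrightarrow> L = V \<and> f = (\<lambda>(l, j)\<in>V \<times> {..<1}. l) \<and> Y \<in> V \<rightarrow>\<^sub>E {..<k}"
    for L Y f
  proof
    assume "labelled_rule 1 k V L Y f"
    then interpret labelled_rule 1 k V L Y f .
    have "L \<times> {..<1::nat} = (\<lambda>l. (l, 0)) ` L"
      by auto
    then have L: "L = V"
      using label_onto label_row by (simp add: image_image)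
    moreover have "f = (\<lambda>(l, j)\<in>V \<times> {..<1}. l)"
      using L label label_row by (intro PiE_ext[OF label]) auto
    ultimately show "L = V \<and> f = (\<lambda>(l, j)\<in>V \<times> {..<1}. l) \<and> Y \<in> V \<rightarrow>\<^sub>E {..<k}"
      using colour by simp
  next
    assume "L = V \<and> f = (\<lambda>(l, j)\<in>V \<times> {..<1}. l) \<and> Y \<in> V \<rightarrow>\<^sub>E {..<k}"
    then show "labelled_rule 1 k V L Y f"
      by unfold_locales (auto simp: image_iff)
  qed
  then show ?thesis
    unfolding labelled_rules_def by auto
qed

lemma P_exponent_1: "P p n 1 k = (if n = p then k ^ n else 0)"
proof -
  have "P p n 1 k = card (labelled_rules n 1 k {..<p})"
    using card_labelled_rules[of 1 "{..<p}" n k] by simp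
  also have "\<dots> = (if n = p then card ({..<p} \<rightarrow>\<^sub>E {..<k}) else 0)"
    unfolding labelled_rules_one_level by (simp add: card_image inj_on_def)
  finally show ?thesis
    by (simp add: card_PiE)
qed

lemma P_size_0:
  assumes "0 < d" "0 < n"
  shows "P 0 n d k = 0"
proof -
  have "labelled_rules n d k {} = {}"
    using labelled_rule.rows_subset[OF _ assms(1)] assms(2) by (fastforce simp: labelled_rules_def)
  then show ?thesis
    using card_labelled_rules[OF assms(1), of "{}" n k] by simp
qed

section \<open>The recursion over the least label\<close>

context labelled_rule
begin

lemma restrict_rows_levels:
  assumes "S \<subseteq> L" "0 < d'" "d' \<le> d"
  shows "labelled_rule d' k (f ` (S \<times> {..<d'})) S (restrict Y S) (restrict f (S \<times> {..<d'}))"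
proof
  show "restrict Y S \<in> S \<rightarrow>\<^sub>E {..<k}"
    using colour assms(1) by auto
  show "restrict f (S \<times> {..<d'}) \<in> S \<times> {..<d'} \<rightarrow>\<^sub>E f ` (S \<times> {..<d'})"
    by auto
  show "restrict f (S \<times> {..<d'}) ` (S \<times> {..<d'}) = f ` (S \<times> {..<d'})"
    by simp
next
  fix l assume "l \<in> S"
  then show "restrict f (S \<times> {..<d'}) (l, 0) = l"
    using assms label_row by auto
next
  fix l l' j assume "l \<in> S" "l' \<in> S" "j < d'" "restrict f (S \<times> {..<d'}) (l, j) = restrict f (S \<times> {..<d'}) (l', j)"
  then show "restrict Y S l = restrict Y S l'"
    using assms colour_eq[of l l' j] by auto
next
  fix l j j' assume "l \<in> S" "j' < j" "j < d'"
  then show "restrict f (S \<times> {..<d'}) (l, j) < restrict f (S \<times> {..<d'}) (l, j')"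
    using assms label_decreasing[of l j' j] by auto
next
  fix l l' j j' assume "l \<in> S" "l' \<in> S" "j < d'" "j' < d'"
    "restrict f (S \<times> {..<d'}) (l, j) = restrict f (S \<times> {..<d'}) (l', j')"
  then show "j = j'"
    using assms label_level[of l l' j j'] by auto
next
  fix l l' j assume "l \<in> S" "l' \<in> S" "Suc j < d'"
    "restrict f (S \<times> {..<d'}) (l, j) = restrict f (S \<times> {..<d'}) (l', j)"
  then show "restrict f (S \<times> {..<d'}) (l, Suc j) = restrict f (S \<times> {..<d'}) (l', Suc j)"
    using assms label_eq_Suc[of l l' j] by auto
qed

lemma single_colour: "labelled_rule d 1 V L (\<lambda>_\<in>L. 0) f"
proof
  show "(\<lambda>_\<in>L. 0::nat) \<in> L \<rightarrow>\<^sub>E {..<1}"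
    by auto
  show "f \<in> L \<times> {..<d} \<rightarrow>\<^sub>E V"
    by (rule label)
  show "f ` (L \<times> {..<d}) = V"
    by (rule label_onto)
qed (fact label_row, simp, fact label_decreasing, fact label_level, fact label_eq_Suc)

end

lemma override_on_PiE:
  "f \<in> A \<rightarrow>\<^sub>E C \<Longrightarrow> g \<in> B \<rightarrow>\<^sub>E D \<Longrightarrow> override_on g f A \<in> A \<union> B \<rightarrow>\<^sub>E C \<union> D"
  by (auto simp: PiE_iff override_on_def extensional_def)

lemma labelled_rule_union:
  assumes r1: "labelled_rule d k V1 L1 Y1 f1" and r2: "labelled_rule d k V2 L2 Y2 f2"
    and disj: "V1 \<inter> V2 = {}" and d: "0 < d"
  shows "labelled_rule d k (V1 \<union> V2) (L1 \<union> L2)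
    (override_on Y2 Y1 L1) (override_on f2 f1 (L1 \<times> {..<d}))"
proof -
  interpret r1: labelled_rule d k V1 L1 Y1 f1 by (fact r1)
  interpret r2: labelled_rule d k V2 L2 Y2 f2 by (fact r2)
  have rows: "L1 \<inter> L2 = {}"
    using r1.rows_subset[OF d] r2.rows_subset[OF d] disj by blast
  let ?Y = "override_on Y2 Y1 L1" and ?f = "override_on f2 f1 (L1 \<times> {..<d})"
  have Y1: "?Y l = Y1 l" if "l \<in> L1" for l
    using that by (simp add: override_on_def)
  have Y2: "?Y l = Y2 l" if "l \<in> L2" for l
    using that rows by (auto simp: override_on_def)
  have f1: "?f (l, j) = f1 (l, j)" if "l \<in> L1" "j < d" for l j
    using that by (simp add: override_on_def)
  have f2: "?f (l, j) = f2 (l, j)" if "l \<in> L2" for l j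
    using that rows by (auto simp: override_on_def)
  have in_V1: "?f (l, j) \<in> V1 \<longleftrightarrow> l \<in> L1" if "l \<in> L1 \<union> L2" "j < d" for l j
    using that f1 f2 r1.label_in r2.label_in disj by (cases "l \<in> L1") auto
  have same_side: "l \<in> L1 \<and> l' \<in> L1 \<or> l \<in> L2 \<and> l' \<in> L2"
    if "l \<in> L1 \<union> L2" "l' \<in> L1 \<union> L2" "j < d" "j' < d" "?f (l, j) = ?f (l', j')" for l l' j j'
    using in_V1[OF that(1,3)] in_V1[OF that(2,4)] that by auto
  show ?thesis
  proof
    show "?Y \<in> L1 \<union> L2 \<rightarrow>\<^sub>E {..<k}"
      using override_on_PiE[OF r1.colour r2.colour] by simp
    show "?f \<in> (L1 \<union> L2) \<times> {..<d} \<rightarrow>\<^sub>E V1 \<union> V2"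
      using override_on_PiE[OF r1.label r2.label] by (simp add: Sigma_Un_distrib1)
    have "?f ` ((L1 \<union> L2) \<times> {..<d}) = f1 ` (L1 \<times> {..<d}) \<union> f2 ` (L2 \<times> {..<d})"
      unfolding Sigma_Un_distrib1 image_Un using f1 f2 by (intro arg_cong2[where f = "(\<union>)"] image_cong) auto
    then show "?f ` ((L1 \<union> L2) \<times> {..<d}) = V1 \<union> V2"
      using r1.label_onto r2.label_onto by simp
  next
    fix l assume "l \<in> L1 \<union> L2"
    then show "?f (l, 0) = l"
      using f1 f2 d r1.label_row r2.label_row by auto
  next
    fix l l' j assume a: "l \<in> L1 \<union> L2" "l' \<in> L1 \<union> L2" "j < d" "?f (l, j) = ?f (l', j)"
    then show "?Y l = ?Y l'"
      using same_side[OF a(1,2,3,3,4)] rows f1 f2 Y1 Y2 r1.colour_eq[of l l' j] r2.colour_eq[of l l' j]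
      by auto
  next
    fix l j j' assume "l \<in> L1 \<union> L2" "j' < j" "j < d"
    then show "?f (l, j) < ?f (l, j')"
      using f1 f2 r1.label_decreasing[of l j' j] r2.label_decreasing[of l j' j] by auto
  next
    fix l l' j j' assume a: "l \<in> L1 \<union> L2" "l' \<in> L1 \<union> L2" "j < d" "j' < d" "?f (l, j) = ?f (l', j')"
    then show "j = j'"
      using same_side[OF a] rows f1 f2 r1.label_level[of l l' j j'] r2.label_level[of l l' j j'] by auto
  next
    fix l l' j assume a: "l \<in> L1 \<union> L2" "l' \<in> L1 \<union> L2" "Suc j < d" "?f (l, j) = ?f (l', j)"
    then show "?f (l, Suc j) = ?f (l', Suc j)"
      using same_side[OF a(1,2) _ _ a(4)] rows f1 f2 r1.label_eq_Suc[of l l' j] r2.label_eq_Suc[of l l' j]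
      by auto
  qed
qed

definition extend_last_level :: "nat \<Rightarrow> nat \<Rightarrow> nat set \<Rightarrow> (nat \<times> nat \<Rightarrow> nat) \<Rightarrow> nat \<times> nat \<Rightarrow> nat" where
  "extend_last_level d m S g = (\<lambda>(l, j)\<in>S \<times> {..<Suc d}. if j = d then m else g (l, j))"

lemma (in labelled_rule) add_last_level:
  assumes d: "0 < d" and m: "\<And>v. v \<in> V \<Longrightarrow> m < v" and c: "c < k'" and L: "L \<noteq> {}"
  shows "labelled_rule (Suc d) k' (insert m V) L (\<lambda>_\<in>L. c) (extend_last_level d m L f)"
proof -
  let ?g = "extend_last_level d m L f"
  have g: "?g (l, j) = (if j = d then m else f (l, j))" if "l \<in> L" "j < Suc d" for l j
    using that by (simp add: extend_last_level_def)
  have g_m: "?g (l, j) = m \<longleftrightarrow> j = d" if "l \<in> L" "j < Suc d" for l j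
  proof (cases "j = d")
    case False
    then have "m < f (l, j)"
      using m label_in that by simp
    then show ?thesis
      using g that False by simp
  qed (use g that in simp)
  show ?thesis
  proof
    show "(\<lambda>_\<in>L. c) \<in> L \<rightarrow>\<^sub>E {..<k'}"
      using c by simp
    show "?g \<in> L \<times> {..<Suc d} \<rightarrow>\<^sub>E insert m V"
      using label_in by (auto simp: extend_last_level_def)
    have "?g ` (L \<times> {..<Suc d}) = insert m (f ` (L \<times> {..<d}))"
      using g L by (force simp: image_iff less_Suc_eq)
    then show "?g ` (L \<times> {..<Suc d}) = insert m V"
      using label_onto by simp
  next
    fix l assume "l \<in> L"
    then show "?g (l, 0) = l"
      using g d label_row by simp
  next
    fix l j j' assume "l \<in> L" "j' < j" "j < Suc d"
    then show "?g (l, j) < ?g (l, j')"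
      using g m label_in label_decreasing[of l j' j] by auto
  next
    fix l l' j j' assume a: "l \<in> L" "l' \<in> L" "j < Suc d" "j' < Suc d" "?g (l, j) = ?g (l', j')"
    then have "j = d \<longleftrightarrow> j' = d"
      using g_m[OF a(1,3)] g_m[OF a(2,4)] by simp
    then show "j = j'"
      using a g label_level[OF a(1,2), of j j'] by (cases "j = d") auto
  next
    fix l l' j assume a: "l \<in> L" "l' \<in> L" "Suc j < Suc d" "?g (l, j) = ?g (l', j)"
    show "?g (l, Suc j) = ?g (l', Suc j)"
    proof (cases "Suc j = d")
      case False
      then have "Suc j < d" "f (l, j) = f (l', j)"
        using a g by auto
      then show ?thesis
        using a g label_eq_Suc[OF a(1,2)] by simp
    qed (use a g in simp)
  qed simp
qed

definition split_rule :: "nat \<Rightarrow> nat \<Rightarrow> labelling \<Rightarrow> nat \<times> nat set \<times> labelling \<times> labelling" where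
  "split_rule d m = (\<lambda>(L, Y, f). let S = {l \<in> L. f (l, d) = m} in
     (Y (Min S), f ` (S \<times> {..<d}), (S, \<lambda>_\<in>S. 0, restrict f (S \<times> {..<d})),
      (L - S, restrict Y (L - S), restrict f ((L - S) \<times> {..<Suc d}))))"

definition join_rules :: "nat \<Rightarrow> nat \<Rightarrow> nat \<times> nat set \<times> labelling \<times> labelling \<Rightarrow> labelling" where
  "join_rules d m = (\<lambda>(c, A, (S, _, g), (L, Y, f)).
     (S \<union> L, override_on Y (\<lambda>_\<in>S. c) S, override_on f (extend_last_level d m S g) (S \<times> {..<Suc d})))"

definition split_rules :: "nat \<Rightarrow> nat \<Rightarrow> nat \<Rightarrow> nat set \<Rightarrow> (nat \<times> nat set \<times> labelling \<times> labelling) set" where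
  "split_rules n d k X = {..<k} \<times> (SIGMA A:Pow X. \<Union>j\<in>{1..n}.
     labelled_rules j d 1 A \<times> labelled_rules (n - j) (Suc d) k (X - A))"

context
  fixes d m :: nat and V :: "nat set"
  assumes d: "0 < d" and V: "finite V" "V \<noteq> {}" and m: "m = Min V"
begin

lemma min_label: "m \<in> V" "v \<in> V \<Longrightarrow> m \<le> v"
  using V by (simp_all add: m)

lemma min_label_last_level:
  assumes "labelled_rule (Suc d) k V L Y f" "l \<in> L" "j < Suc d" "f (l, j) = m"
  shows "j = d"
proof (rule ccontr)
  interpret labelled_rule "Suc d" k V L Y f by (fact assms(1))
  assume "j \<noteq> d"
  then have "f (l, d) < f (l, j)"
    using assms(2,3) by (intro label_decreasing) auto
  moreover have "m \<le> f (l, d)"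
    using assms(2) label_in min_label(2) by simp
  ultimately show False
    using assms(4) by simp
qed

lemma min_label_rows_nonempty:
  assumes "labelled_rule (Suc d) k V L Y f"
  shows "{l \<in> L. f (l, d) = m} \<noteq> {}"
proof -
  interpret labelled_rule "Suc d" k V L Y f by (fact assms)
  obtain l j where "l \<in> L" "j < Suc d" "f (l, j) = m"
    using min_label(1) label_onto by (metis (no_types, lifting) SigmaE imageE lessThan_iff)
  then show ?thesis
    using min_label_last_level[OF assms] by blast
qed

lemma min_label_rows_separate:
  assumes r: "labelled_rule (Suc d) k V L Y f"
  defines "S \<equiv> {l \<in> L. f (l, d) = m}"
  shows "f ` (S \<times> {..<d}) \<subseteq> V - {m}"
    and "f ` ((L - S) \<times> {..<Suc d}) = V - {m} - f ` (S \<times> {..<d})"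
proof -
  interpret labelled_rule "Suc d" k V L Y f by (fact r)
  let ?A = "f ` (S \<times> {..<d})" and ?B = "f ` ((L - S) \<times> {..<Suc d})"
  have SL: "S \<subseteq> L"
    by (auto simp: S_def)
  have separated: "f (l, j) \<noteq> f (l', j')"
    if "l \<in> S" "l' \<in> L - S" "j < Suc d" "j' < Suc d" for l l' j j'
  proof
    assume eq: "f (l, j) = f (l', j')"
    then have "j = j'"
      using eq that SL by (auto intro: label_level[of l l'])
    then have "f (l, d) = f (l', d)"
      using eq that SL by (auto intro: label_eq_mono[of l l' j'])
    then show False
      using that by (simp add: S_def)
  qed
  then have AB: "?A \<inter> ?B = {}"
    by fastforce
  have mA: "m \<notin> ?A"
  proof
    assume "m \<in> ?A"
    then obtain l j where "l \<in> S" "j < d" "f (l, j) = m"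
      by auto
    then show False
      using min_label_last_level[OF r, of l j] SL by auto
  qed
  have mB: "m \<notin> ?B"
  proof
    assume "m \<in> ?B"
    then obtain l j where l: "l \<in> L - S" "j < Suc d" "f (l, j) = m"
      by auto
    then have "j = d"
      using min_label_last_level[OF r] by blast
    then show False
      using l by (simp add: S_def)
  qed
  have "S \<times> {..<Suc d} = S \<times> {d} \<union> S \<times> {..<d}"
    by auto
  moreover have "f ` (S \<times> {d}) = {m}"
    using min_label_rows_nonempty[OF r] by (auto simp: S_def)
  moreover have "L \<times> {..<Suc d} = S \<times> {..<Suc d} \<union> (L - S) \<times> {..<Suc d}"
    using SL by auto
  ultimately have "V = insert m (?A \<union> ?B)"
    using label_onto by (simp add: image_Un)
  then show "?A \<subseteq> V - {m}" "?B = V - {m} - ?A"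
    using mA mB AB by auto
qed

lemma split_rule_mem:
  assumes t: "(L, Y, f) \<in> labelled_rules n (Suc d) k V"
  shows "split_rule d m (L, Y, f) \<in> split_rules n d k (V - {m})"
proof -
  have r: "labelled_rule (Suc d) k V L Y f" and n: "card L = n"
    using t by (auto simp: labelled_rules_def)
  interpret labelled_rule "Suc d" k V L Y f by (fact r)
  define S where "S = {l \<in> L. f (l, d) = m}"
  define A where "A = f ` (S \<times> {..<d})"
  have finL: "finite L"
    using finite_rows V(1) by simp
  have SL: "S \<subseteq> L"
    by (auto simp: S_def)
  have S_ne: "S \<noteq> {}"
    using min_label_rows_nonempty[OF r] by (simp add: S_def)
  have "labelled_rule d 1 A S (\<lambda>_\<in>S. 0) (restrict f (S \<times> {..<d}))"
    using labelled_rule.single_colour[OF restrict_rows_levels[OF SL d]] by (simp add: A_def)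
  then have part1: "(S, \<lambda>_\<in>S. 0, restrict f (S \<times> {..<d})) \<in> labelled_rules (card S) d 1 A"
    by (simp add: labelled_rules_def)
  have "labelled_rule (Suc d) k (V - {m} - A) (L - S) (restrict Y (L - S))
      (restrict f ((L - S) \<times> {..<Suc d}))"
    using restrict_rows_levels[of "L - S" "Suc d"] min_label_rows_separate(2)[OF r]
    by (simp add: A_def S_def)
  moreover have "card (L - S) = n - card S"
    using n SL finL by (simp add: card_Diff_subset finite_subset)
  ultimately have part2: "(L - S, restrict Y (L - S), restrict f ((L - S) \<times> {..<Suc d}))
      \<in> labelled_rules (n - card S) (Suc d) k (V - {m} - A)"
    by (simp add: labelled_rules_def)
  have "card S \<in> {1..n}"
    using S_ne SL finL n by (auto simp: Suc_le_eq card_gt_0_iff finite_subset card_mono)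
  moreover have "Y (Min S) < k"
    using Min_in[OF finite_subset[OF SL finL] S_ne] SL PiE_mem[OF colour] by auto
  moreover have "A \<in> Pow (V - {m})"
    using min_label_rows_separate(1)[OF r] by (simp add: A_def S_def)
  ultimately have "(Y (Min S), A, (S, \<lambda>_\<in>S. 0, restrict f (S \<times> {..<d})),
      (L - S, restrict Y (L - S), restrict f ((L - S) \<times> {..<Suc d}))) \<in> split_rules n d k (V - {m})"
    using part1 part2 unfolding split_rules_def by blast
  then show ?thesis
    by (simp add: split_rule_def S_def A_def Let_def)
qed

lemma split_rulesE:
  assumes "(c, A, (S, Y1, g), (L, Y, f)) \<in> split_rules n d k (V - {m})"
  obtains j where "c < k" "A \<subseteq> V - {m}" "j \<in> {1..n}"
    "labelled_rule d 1 A S Y1 g" "card S = j"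
    "labelled_rule (Suc d) k (V - {m} - A) L Y f" "card L = n - j"
  using assms unfolding split_rules_def labelled_rules_def by auto

lemma join_rules_mem:
  assumes u: "(c, A, (S, Y1, g), (L, Y, f)) \<in> split_rules n d k (V - {m})"
  shows "join_rules d m (c, A, (S, Y1, g), (L, Y, f)) \<in> labelled_rules n (Suc d) k V"
proof -
  obtain j where c: "c < k" and A: "A \<subseteq> V - {m}" and j: "j \<in> {1..n}"
    and r1: "labelled_rule d 1 A S Y1 g" and S: "card S = j"
    and r2: "labelled_rule (Suc d) k (V - {m} - A) L Y f" and L: "card L = n - j"
    using split_rulesE[OF u] by blast
  have SA: "S \<subseteq> A" and LB: "L \<subseteq> V - {m} - A"
    using labelled_rule.rows_subset[OF r1 d] labelled_rule.rows_subset[OF r2] by auto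
  have fin: "finite S" "finite L"
    using finite_subset[OF SA finite_subset[OF A]] finite_subset[OF LB] V(1) by auto
  have "S \<noteq> {}"
    using S j by auto
  moreover have "m < a" if "a \<in> A" for a
    using that A min_label(2) by fastforce
  ultimately have "labelled_rule (Suc d) k (insert m A) S (\<lambda>_\<in>S. c) (extend_last_level d m S g)"
    using labelled_rule.add_last_level[OF r1 d _ c] by blast
  then have "labelled_rule (Suc d) k (insert m A \<union> (V - {m} - A)) (S \<union> L)
      (override_on Y (\<lambda>_\<in>S. c) S) (override_on f (extend_last_level d m S g) (S \<times> {..<Suc d}))"
    using r2 by (rule labelled_rule_union) auto
  moreover have "insert m A \<union> (V - {m} - A) = V"
    using A min_label(1) by auto
  moreover have "card (S \<union> L) = n"
    using SA LB fin S L j by (subst card_Un_disjoint) auto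
  ultimately show ?thesis
    by (simp add: join_rules_def labelled_rules_def)
qed

lemma join_split_rule:
  assumes t: "(L, Y, f) \<in> labelled_rules n (Suc d) k V"
  shows "join_rules d m (split_rule d m (L, Y, f)) = (L, Y, f)"
proof -
  have r: "labelled_rule (Suc d) k V L Y f"
    using t by (simp add: labelled_rules_def)
  interpret labelled_rule "Suc d" k V L Y f by (fact r)
  define S where "S = {l \<in> L. f (l, d) = m}"
  have SL: "S \<subseteq> L"
    by (auto simp: S_def)
  have "finite S"
    using finite_subset[OF SL finite_subset[OF rows_subset V(1)]] by simp
  moreover have "S \<noteq> {}"
    using min_label_rows_nonempty[OF r] by (simp add: S_def)
  ultimately have MinS: "Min S \<in> S"
    by (rule Min_in)
  have "override_on (restrict Y (L - S)) (\<lambda>_\<in>S. Y (Min S)) S = Y"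
  proof
    fix l
    show "override_on (restrict Y (L - S)) (\<lambda>_\<in>S. Y (Min S)) S l = Y l"
    proof (cases "l \<in> S")
      case True
      then have "Y (Min S) = Y l"
        using MinS SL by (intro colour_eq[of _ _ d]) (auto simp: S_def)
      then show ?thesis
        using True by (simp add: override_on_def)
    next
      case False
      then show ?thesis
        using PiE_arb[OF colour] by (auto simp: override_on_def)
    qed
  qed
  moreover have "override_on (restrict f ((L - S) \<times> {..<Suc d}))
      (extend_last_level d m S (restrict f (S \<times> {..<d}))) (S \<times> {..<Suc d}) = f"
  proof
    fix x :: "nat \<times> nat"
    obtain l j where x: "x = (l, j)"
      by (cases x)
    show "override_on (restrict f ((L - S) \<times> {..<Suc d}))
        (extend_last_level d m S (restrict f (S \<times> {..<d}))) (S \<times> {..<Suc d}) x = f x"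
      using PiE_arb[OF label, of x] SL unfolding x
      by (auto simp: override_on_def extend_last_level_def S_def less_Suc_eq)
  qed
  moreover have "S \<union> (L - S) = L"
    using SL by auto
  ultimately show ?thesis
    by (simp add: split_rule_def join_rules_def S_def Let_def)
qed

lemma split_join_rules:
  assumes u: "(c, A, (S, Y1, g), (L, Y, f)) \<in> split_rules n d k (V - {m})"
  shows "split_rule d m (join_rules d m (c, A, (S, Y1, g), (L, Y, f))) = (c, A, (S, Y1, g), (L, Y, f))"
proof -
  obtain j where A: "A \<subseteq> V - {m}" and j: "j \<in> {1..n}"
    and r1: "labelled_rule d 1 A S Y1 g" and S: "card S = j"
    and r2: "labelled_rule (Suc d) k (V - {m} - A) L Y f"
    using split_rulesE[OF u] by blast
  interpret r1: labelled_rule d 1 A S Y1 g by (fact r1)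
  interpret r2: labelled_rule "Suc d" k "V - {m} - A" L Y f by (fact r2)
  have SA: "S \<subseteq> A" and LB: "L \<subseteq> V - {m} - A"
    using r1.rows_subset[OF d] r2.rows_subset by auto
  have SL: "S \<inter> L = {}"
    using SA LB by auto
  have "0 < card S"
    using S j by auto
  then have MinS: "Min S \<in> S"
    by (simp add: card_gt_0_iff)
  let ?Y = "override_on Y (\<lambda>_\<in>S. c) S"
  let ?f = "override_on f (extend_last_level d m S g) (S \<times> {..<Suc d})"
  have f_S: "?f (l, i) = (if i = d then m else g (l, i))" if "l \<in> S" "i < Suc d" for l i
    using that by (simp add: override_on_def extend_last_level_def)
  have f_L: "?f (l, i) = f (l, i)" if "l \<in> L" for l i
    using that SL by (auto simp: override_on_def)
  have rows: "{l \<in> S \<union> L. ?f (l, d) = m} = S"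
    using f_S f_L r2.label_in[of _ d] by auto
  have "?Y (Min S) = c"
    using MinS by (simp add: override_on_def)
  moreover have "?f ` (S \<times> {..<d}) = A"
    using f_S r1.label_onto by (force simp: image_iff)
  moreover have "(\<lambda>_\<in>S. 0) = Y1"
    using r1.colour by (intro PiE_ext[of _ S "\<lambda>_. {..<1}"]) auto
  moreover have "restrict ?f (S \<times> {..<d}) = g"
    using r1.label f_S by (intro PiE_ext[of _ "S \<times> {..<d}" "\<lambda>_. A"]) auto
  moreover have "restrict ?Y L = Y"
    using r2.colour SL by (intro PiE_ext[of _ L "\<lambda>_. {..<k}"]) (auto simp: override_on_def)
  moreover have "restrict ?f (L \<times> {..<Suc d}) = f"
    using r2.label f_L by (intro PiE_ext[of _ "L \<times> {..<Suc d}" "\<lambda>_. V - {m} - A"]) auto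
  moreover have "(S \<union> L) - S = L"
    using SL by auto
  moreover have "split_rule d m (S \<union> L, ?Y, ?f) = (?Y (Min S), ?f ` (S \<times> {..<d}),
      (S, \<lambda>_\<in>S. 0, restrict ?f (S \<times> {..<d})),
      ((S \<union> L) - S, restrict ?Y ((S \<union> L) - S), restrict ?f (((S \<union> L) - S) \<times> {..<Suc d})))"
    by (simp only: split_rule_def prod.case Let_def rows)
  ultimately show ?thesis
    by (simp add: join_rules_def)
qed

lemma bij_betw_split_rule:
  "bij_betw (split_rule d m) (labelled_rules n (Suc d) k V) (split_rules n d k (V - {m}))"
proof (rule bij_betw_byWitness[where f' = "join_rules d m"])
  show "\<forall>t\<in>labelled_rules n (Suc d) k V. join_rules d m (split_rule d m t) = t"
    using join_split_rule by fast
  show "\<forall>u\<in>split_rules n d k (V - {m}). split_rule d m (join_rules d m u) = u"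
    using split_join_rules by fast
  show "split_rule d m ` labelled_rules n (Suc d) k V \<subseteq> split_rules n d k (V - {m})"
    using split_rule_mem by (fast intro!: image_subsetI)
  show "join_rules d m ` split_rules n d k (V - {m}) \<subseteq> labelled_rules n (Suc d) k V"
    using join_rules_mem by (fast intro!: image_subsetI)
qed

end

lemma card_labelled_rules_Suc:
  assumes "0 < d" "finite V" "V \<noteq> {}"
  shows "card (labelled_rules n (Suc d) k V) = card (split_rules n d k (V - {Min V}))"
  using bij_betw_same_card[OF bij_betw_split_rule[OF assms refl]] .

lemma finite_labelled_rules:
  assumes d: "0 < d" and V: "finite V"
  shows "finite (labelled_rules n d k V)"
proof (rule finite_subset)
  show "labelled_rules n d k V \<subseteq> (SIGMA L:Pow V. (L \<rightarrow>\<^sub>E {..<k}) \<times> (L \<times> {..<d} \<rightarrow>\<^sub>E V))"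
  proof
    fix t assume "t \<in> labelled_rules n d k V"
    then obtain L Y f where t: "t = (L, Y, f)" and r: "labelled_rule d k V L Y f"
      by (auto simp: labelled_rules_def)
    then show "t \<in> (SIGMA L:Pow V. (L \<rightarrow>\<^sub>E {..<k}) \<times> (L \<times> {..<d} \<rightarrow>\<^sub>E V))"
      using labelled_rule.rows_subset[OF r d] labelled_rule.colour[OF r] labelled_rule.label[OF r] by simp
  qed
  show "finite (SIGMA L:Pow V. (L \<rightarrow>\<^sub>E {..<k}) \<times> (L \<times> {..<d} \<rightarrow>\<^sub>E V))"
  proof (rule finite_SigmaI)
    fix L assume "L \<in> Pow V"
    then have "finite L"
      using finite_subset[of L V] V by simp
    then show "finite ((L \<rightarrow>\<^sub>E {..<k}) \<times> (L \<times> {..<d} \<rightarrow>\<^sub>E V))"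
      using V by (simp add: finite_PiE)
  qed (use V in simp)
qed

lemma card_split_rules:
  assumes X: "finite X" and d: "0 < d"
  shows "card (split_rules n d k X) =
    k * (\<Sum>A\<in>Pow X. \<Sum>j=1..n. card (labelled_rules j d 1 A) * card (labelled_rules (n - j) (Suc d) k (X - A)))"
proof -
  let ?T = "\<lambda>A j. labelled_rules j d 1 A \<times> labelled_rules (n - j) (Suc d) k (X - A)"
  have fin: "finite (?T A j)" if "A \<in> Pow X" for A j
    using that finite_subset[of A X] X d by (simp add: finite_labelled_rules)
  have disj: "?T A i \<inter> ?T A j = {}" if "i \<noteq> j" for A i j
    using that by (auto simp: labelled_rules_def)
  have "card (split_rules n d k X) = k * (\<Sum>A\<in>Pow X. card (\<Union>j\<in>{1..n}. ?T A j))"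
    unfolding split_rules_def using X fin by (simp add: card_cartesian_product card_SigmaI)
  also have "\<dots> = k * (\<Sum>A\<in>Pow X. \<Sum>j=1..n. card (?T A j))"
    using fin disj by (simp add: card_UN_disjoint)
  finally show ?thesis
    by (simp add: card_cartesian_product)
qed

lemma sum_Pow_card:
  assumes "finite X"
  shows "(\<Sum>A\<in>Pow X. g (card A)) = (\<Sum>i=0..card X. (card X choose i) * g i)"
proof -
  have "(\<Sum>A\<in>Pow X. g (card A)) = (\<Sum>i=0..card X. \<Sum>A\<in>{A \<in> Pow X. card A = i}. g (card A))"
    using assms card_mono[OF assms] by (intro sum.group[symmetric]) auto
  also have "\<dots> = (\<Sum>i=0..card X. (card X choose i) * g i)"
    using n_subsets[OF assms] by (intro sum.cong) auto
  finally show ?thesis .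
qed

lemma P_exponent_Suc:
  assumes d: "0 < d" and p: "0 < p"
  shows "P p n (Suc d) k = k * (\<Sum>j=1..n. \<Sum>i=0..p - 1.
    ((p - 1) choose i) * P i j d 1 * P (p - 1 - i) (n - j) (Suc d) k)"
proof -
  let ?X = "{..<p} - {0}"
  have X: "finite ?X" "card ?X = p - 1"
    using p by auto
  have "Min {..<p} = 0"
    using p by (intro Min_eqI) auto
  then have "P p n (Suc d) k = card (split_rules n d k ?X)"
    using card_labelled_rules[of "Suc d" "{..<p}" n k] card_labelled_rules_Suc[OF d, of "{..<p}" n k] p
    by auto
  also have "\<dots> = k * (\<Sum>A\<in>Pow ?X. \<Sum>j=1..n. P (card A) j d 1 * P (p - 1 - card A) (n - j) (Suc d) k)"
  proof -
    have "card (labelled_rules j d 1 A) * card (labelled_rules (n - j) (Suc d) k (?X - A)) =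
        P (card A) j d 1 * P (p - 1 - card A) (n - j) (Suc d) k" if "A \<in> Pow ?X" for A j
    proof -
      have "finite A" "card (?X - A) = p - 1 - card A"
        using that X finite_subset[of A ?X] card_Diff_subset[of A ?X] by auto
      then show ?thesis
        using card_labelled_rules[OF d] card_labelled_rules[of "Suc d" "?X - A"] by simp
    qed
    then show ?thesis
      unfolding card_split_rules[OF X(1) d] by simp
  qed
  also have "\<dots> = k * (\<Sum>j=1..n. \<Sum>A\<in>Pow ?X. P (card A) j d 1 * P (p - 1 - card A) (n - j) (Suc d) k)"
    by (subst sum.swap) (rule refl)
  also have "\<dots> = k * (\<Sum>j=1..n. \<Sum>i=0..p - 1. ((p - 1) choose i) * (P i j d 1 * P (p - 1 - i) (n - j) (Suc d) k))"
    using sum_Pow_card[OF X(1), of "\<lambda>i. P i _ d 1 * P (p - 1 - i) (n - _) (Suc d) k"] X(2) by simp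
  finally show ?thesis
    by (simp add: mult.assoc)
qed

theorem lemma9p1:
  fixes n d k p :: nat
  shows "(d = 0 \<and> n > k \<longrightarrow> P p n d k = 0) \<and>
         (n = 0 \<and> p = 0 \<longrightarrow> P p n d k = 1) \<and>
         (n = 0 \<and> p \<ge> 1 \<longrightarrow> P p n d k = 0) \<and>
         (d = 0 \<and> 1 \<le> n \<and> n \<le> k \<and> p = 0 \<longrightarrow> P p n d k = k choose n) \<and>
         (d = 0 \<and> 1 \<le> n \<and> n \<le> k \<and> p \<ge> 1 \<longrightarrow> P p n d k = 0) \<and>
         (d = 1 \<and> n \<ge> 1 \<and> n = p \<longrightarrow> P p n d k = k ^ n) \<and>
         (d = 1 \<and> n \<ge> 1 \<and> n \<noteq> p \<longrightarrow> P p n d k = 0) \<and>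
         (d \<ge> 2 \<and> n \<ge> 1 \<and> p = 0 \<longrightarrow> P p n d k = 0) \<and>
         (d \<ge> 2 \<and> n \<ge> 1 \<and> p \<ge> 1 \<longrightarrow>
            P p n d k = k * (\<Sum>j = 1..n. \<Sum>i = 0..p - 1.
               ((p - 1) choose i) * P i j (d - 1) 1 * P (p - 1 - i) (n - j) d k))"
proof -
  have "P p n d k = k * (\<Sum>j = 1..n. \<Sum>i = 0..p - 1.
      ((p - 1) choose i) * P i j (d - 1) 1 * P (p - 1 - i) (n - j) d k)" if "d \<ge> 2" "p \<ge> 1"
    using P_exponent_Suc[of "d - 1" p n k] that by (simp add: Suc_diff_Suc numeral_2_eq_2)
  then show ?thesis
    using P_exponent_0[of p n k] P_arity_0[of p d k] P_exponent_1[of p n k] P_size_0[of d n k]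
    by (auto simp: binomial_eq_0)
qed

end
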